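(* Let $(R,\mathfrak{m})$ be a $d$-dimensional local ring of prime characteristic $p>0$, let $I$ be an $\mathfrak{m}$-primary ideal, and let $J=(x_1,\ldots,x_d)$ be a minimal reduction of $I$ generated by a system of parameters. For $q=p^e$ let $\mathcal{R}'_q=R[I^{[q]}t,t^{-1}]$ be the extended Rees algebra of $I^{[q]}$ and $J_q=(x_1^qt,\ldots,x_d^qt)\subseteq\mathcal{R}'_q$; write $\mathcal{R}'=\mathcal{R}'_1$. Then $a(H^d_{J_q}(\mathcal{R}'_q))\leq a(H^d_{J_1}(\mathcal{R}'))$ for all $q=p^e$.
   Context: $I^{[q]}=(x^q\mid x\in I)$. The local cohomology modules $H^d_{J_q}(\mathcal{R}'_q)$ are $\mathbb{Z}$-graded with the grading induced by $\deg t=1$. For a $\mathbb{Z}$-graded module $M$, $a(M)=\sup\{n\in\mathbb{Z}\mid M_n\neq0\}$. *)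

theory Defs
  imports "HOL-Computational_Algebra.Formal_Laurent_Series" "HOL-Library.Extended_Real"
begin

section \<open>Ideals of a commutative ring (the ring is the whole type)\<close>

definition is_ideal :: "'a::comm_ring_1 set \<Rightarrow> bool" where
  "is_ideal I \<longleftrightarrow> 0 \<in> I \<and> (\<forall>a\<in>I. \<forall>b\<in>I. a + b \<in> I) \<and> (\<forall>r. \<forall>a\<in>I. r * a \<in> I)"

definition ideal_gen :: "'a::comm_ring_1 set \<Rightarrow> 'a set" where
  "ideal_gen X = {x. \<forall>I. is_ideal I \<and> X \<subseteq> I \<longrightarrow> x \<in> I}"

definition ideal_prod :: "'a::comm_ring_1 set \<Rightarrow> 'a set \<Rightarrow> 'a set" where
  "ideal_prod I J = ideal_gen {a * b | a b. a \<in> I \<and> b \<in> J}"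

fun ideal_pow :: "'a::comm_ring_1 set \<Rightarrow> nat \<Rightarrow> 'a set" where
  "ideal_pow I 0 = UNIV"
| "ideal_pow I (Suc n) = ideal_prod I (ideal_pow I n)"

definition frob_pow :: "'a::comm_ring_1 set \<Rightarrow> nat \<Rightarrow> 'a set" where
  "frob_pow I q = ideal_gen {x ^ q | x. x \<in> I}"

definition radical :: "'a::comm_ring_1 set \<Rightarrow> 'a set" where
  "radical I = {x. \<exists>n. x ^ n \<in> I}"

definition is_prime_ideal :: "'a::comm_ring_1 set \<Rightarrow> bool" where
  "is_prime_ideal P \<longleftrightarrow> is_ideal P \<and> P \<noteq> UNIV \<and> (\<forall>a b. a * b \<in> P \<longrightarrow> a \<in> P \<or> b \<in> P)"

definition is_maximal_ideal :: "'a::comm_ring_1 set \<Rightarrow> bool" where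
  "is_maximal_ideal M \<longleftrightarrow> is_ideal M \<and> M \<noteq> UNIV \<and>
     (\<forall>J. is_ideal J \<and> M \<subseteq> J \<longrightarrow> J = M \<or> J = UNIV)"

definition noetherian_ring :: "'a::comm_ring_1 itself \<Rightarrow> bool" where
  "noetherian_ring _ \<longleftrightarrow> (\<forall>I::'a set. is_ideal I \<longrightarrow> (\<exists>X. finite X \<and> I = ideal_gen X))"

definition local_ring :: "'a::comm_ring_1 set \<Rightarrow> bool" where
  "local_ring m \<longleftrightarrow> noetherian_ring TYPE('a) \<and> is_maximal_ideal m \<and>
     (\<forall>M. is_maximal_ideal M \<longrightarrow> M = m)"

definition prime_chain :: "'a::comm_ring_1 itself \<Rightarrow> nat \<Rightarrow> bool" where
  "prime_chain _ n \<longleftrightarrow> (\<exists>P :: nat \<Rightarrow> 'a set. (\<forall>i\<le>n. is_prime_ideal (P i)) \<and> (\<forall>i<n. P i \<subset> P (Suc i)))"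

definition krull_dim_eq :: "'a::comm_ring_1 itself \<Rightarrow> nat \<Rightarrow> bool" where
  "krull_dim_eq T d \<longleftrightarrow> prime_chain T d \<and> \<not> prime_chain T (Suc d)"

definition primary_to :: "'a::comm_ring_1 set \<Rightarrow> 'a set \<Rightarrow> bool" where
  "primary_to m I \<longleftrightarrow> is_ideal I \<and> I \<noteq> UNIV \<and> radical I = m"

definition is_reduction :: "'a::comm_ring_1 set \<Rightarrow> 'a set \<Rightarrow> bool" where
  "is_reduction J I \<longleftrightarrow> is_ideal J \<and> J \<subseteq> I \<and>
     (\<exists>n. ideal_prod J (ideal_pow I n) = ideal_pow I (Suc n))"

definition is_minimal_reduction :: "'a::comm_ring_1 set \<Rightarrow> 'a set \<Rightarrow> bool" where
  "is_minimal_reduction J I \<longleftrightarrow> is_reduction J I \<and> (\<forall>K. is_reduction K I \<and> K \<subseteq> J \<longrightarrow> K = J)"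

definition system_of_parameters :: "'a::comm_ring_1 set \<Rightarrow> nat \<Rightarrow> (nat \<Rightarrow> 'a) \<Rightarrow> bool" where
  "system_of_parameters m d x \<longleftrightarrow> krull_dim_eq TYPE('a) d \<and> primary_to m (ideal_gen (x ` {..<d}))"

text \<open>R[It,t^-1] = direct sum over n in Z of I^n t^n (I^n = R for n \<le> 0), as a subring of
  the Laurent polynomials R[t,t^-1] (Laurent series with finite support).\<close>
definition ext_rees :: "'a::comm_ring_1 set \<Rightarrow> 'a fls set" where
  "ext_rees I = {f. finite {n. fls_nth f n \<noteq> 0} \<and>
                    (\<forall>n::int. n \<ge> 0 \<longrightarrow> fls_nth f n \<in> ideal_pow I (nat n))}"

text \<open>For y_0..y_{d-1} in a ring S (a subring of type 'b), H^d_{(y)}(S) is the cokernel of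
  the last Cech map: S_Y modulo the sum of the images of S_{Y/y_j}, with Y = prod y_j.
  The class of s/Y^k is zero iff s/Y^k = sum_j b_j/(Y/y_j)^m in S_Y for some m and b_j in S.\<close>
definition cech_top_class_zero :: "'b::comm_ring_1 set \<Rightarrow> (nat \<Rightarrow> 'b) \<Rightarrow> nat \<Rightarrow> 'b \<Rightarrow> nat \<Rightarrow> bool" where
  "cech_top_class_zero S y d s k \<longleftrightarrow>
     (let Y = (\<Prod>j<d. y j) in
      \<exists>m N (b :: nat \<Rightarrow> 'b). (\<forall>j<d. b j \<in> S) \<and>
        Y ^ N * (s * Y ^ m - Y ^ k * (\<Sum>j<d. b j * y j ^ m)) = 0)"

text \<open>Graded component of degree n of H^d_{(y)}(S), for S a graded subring of R[t,t^-1]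
  (grading by deg t = 1) and y_j homogeneous of degree 1: it is nonzero iff some
  homogeneous fraction s/Y^k of degree n (s of degree n + d k) has nonzero class.\<close>
definition cech_top_component_nonzero :: "'a::comm_ring_1 fls set \<Rightarrow> (nat \<Rightarrow> 'a fls) \<Rightarrow> nat \<Rightarrow> int \<Rightarrow> bool" where
  "cech_top_component_nonzero S y d n \<longleftrightarrow>
     (\<exists>k::nat. \<exists>c::'a.
        fls_const c * fls_X_intpow (n + int (d * k)) \<in> S \<and>
        \<not> cech_top_class_zero S y d (fls_const c * fls_X_intpow (n + int (d * k))) k)"

text \<open>a-invariant: sup of degrees of nonzero components (in extended reals, sup of empty = -\<infinity>).\<close>
definition a_inv_top :: "'a::comm_ring_1 fls set \<Rightarrow> (nat \<Rightarrow> 'a fls) \<Rightarrow> nat \<Rightarrow> ereal" where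
  "a_inv_top S y d = Sup {ereal (real_of_int n) | n. cech_top_component_nonzero S y d n}"

definition Jq_gens :: "(nat \<Rightarrow> 'a::comm_ring_1) \<Rightarrow> nat \<Rightarrow> nat \<Rightarrow> 'a fls" where
  "Jq_gens x q i = fls_const (x i ^ q) * fls_X_intpow 1"

end

theory Submission
  imports Defs "HOL-Computational_Algebra.Primes"
begin

text \<open>
  In characteristic p the coefficientwise Frobenius F (sum a_n t^n) = sum a_n^q t^n is a ring
  endomorphism of R[t,t^-1]. It maps R' into R'_q and x_i t to x_i^q t, so it turns every Cech
  relation showing that the class of c t^M / Y^k vanishes in H^d_J(R') into one showing that the
  class of c^q t^M / Y_q^k vanishes in H^d_{J_q}(R'_q), where Y and Y_q are the products of the
  generators. Suppose now that the degree n part of H^d_J(R') is zero, and take a fraction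
  c t^M / Y_q^k of degree n over R'_q, so that c lies in (I^[q])^M. The coefficients c whose class
  vanishes form an ideal of R containing every g^q with g in I^M, and these q-th powers generate
  (I^[q])^M. So the degree n part of H^d_{J_q}(R'_q) vanishes as well, whence the inequality of
  a-invariants.
\<close>

unbundle fps_syntax

lemma ideal_gen_is_ideal: "is_ideal (ideal_gen X)"
  unfolding is_ideal_def ideal_gen_def by auto

lemma ideal_gen_subset: "X \<subseteq> ideal_gen X"
  unfolding ideal_gen_def by auto

lemma ideal_gen_least: "is_ideal I \<Longrightarrow> X \<subseteq> I \<Longrightarrow> ideal_gen X \<subseteq> I"
  unfolding ideal_gen_def by auto

lemma ideal_zero: "is_ideal I \<Longrightarrow> 0 \<in> I"
  unfolding is_ideal_def by auto

lemma ideal_add: "is_ideal I \<Longrightarrow> a \<in> I \<Longrightarrow> b \<in> I \<Longrightarrow> a + b \<in> I"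
  unfolding is_ideal_def by auto

lemma ideal_mult_left: "is_ideal I \<Longrightarrow> a \<in> I \<Longrightarrow> r * a \<in> I"
  unfolding is_ideal_def by auto

lemma is_idealI:
  "0 \<in> I \<Longrightarrow> (\<And>a b. a \<in> I \<Longrightarrow> b \<in> I \<Longrightarrow> a + b \<in> I) \<Longrightarrow> (\<And>r a. a \<in> I \<Longrightarrow> r * a \<in> I)
    \<Longrightarrow> is_ideal I"
  unfolding is_ideal_def by blast

lemma ideal_sum: "is_ideal I \<Longrightarrow> (\<And>x. x \<in> A \<Longrightarrow> f x \<in> I) \<Longrightarrow> sum f A \<in> I"
  by (induction A rule: infinite_finite_induct) (auto intro: ideal_zero ideal_add)

lemma is_ideal_mult_vimage: "is_ideal I \<Longrightarrow> is_ideal {a. a * b \<in> I}"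
  unfolding is_ideal_def by (auto simp: distrib_right mult.assoc)

lemma ideal_gen_mult_mem:
  assumes a: "a \<in> ideal_gen A" and b: "b \<in> ideal_gen B" and C: "is_ideal C"
    and gens: "\<And>u v. u \<in> A \<Longrightarrow> v \<in> B \<Longrightarrow> u * v \<in> C"
  shows "a * b \<in> C"
proof -
  have "a * v \<in> C" if "v \<in> B" for v
    using ideal_gen_least[OF is_ideal_mult_vimage[OF C, of v]] gens that a by blast
  hence "B \<subseteq> {v. v * a \<in> C}"
    by (auto simp: mult.commute)
  hence "ideal_gen B \<subseteq> {v. v * a \<in> C}"
    by (rule ideal_gen_least[OF is_ideal_mult_vimage[OF C]])
  with b show ?thesis
    by (auto simp: mult.commute)
qed

lemma ideal_pow_is_ideal: "is_ideal (ideal_pow I n)"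
  unfolding is_ideal_def
  by (cases n) (auto simp: ideal_prod_def ideal_gen_is_ideal[unfolded is_ideal_def])

lemma ideal_pow_Suc_mem: "u \<in> I \<Longrightarrow> v \<in> ideal_pow I n \<Longrightarrow> u * v \<in> ideal_pow I (Suc n)"
  unfolding ideal_pow.simps ideal_prod_def by (rule ideal_gen_subset[THEN subsetD]) blast

lemma ideal_pow_add_mem:
  "a \<in> ideal_pow I m \<Longrightarrow> b \<in> ideal_pow I n \<Longrightarrow> a * b \<in> ideal_pow I (m + n)"
proof (induction m arbitrary: a)
  case 0
  then show ?case
    by (simp add: ideal_mult_left ideal_pow_is_ideal)
next
  case (Suc m)
  have "{u * v |u v. u \<in> I \<and> v \<in> ideal_pow I m} \<subseteq> {a. a * b \<in> ideal_pow I (Suc (m + n))}"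
  proof safe
    fix u v assume "u \<in> I" "v \<in> ideal_pow I m"
    then have "u * (v * b) \<in> ideal_pow I (Suc (m + n))"
      using Suc.IH Suc.prems(2) by (intro ideal_pow_Suc_mem)
    then show "u * v * b \<in> ideal_pow I (Suc (m + n))"
      by (simp only: mult.assoc)
  qed
  then have "ideal_pow I (Suc m) \<subseteq> {a. a * b \<in> ideal_pow I (Suc (m + n))}"
    unfolding ideal_pow.simps(2)[of I m] ideal_prod_def
    by (rule ideal_gen_least[OF is_ideal_mult_vimage[OF ideal_pow_is_ideal]])
  with Suc.prems(1) show ?case
    by auto
qed

lemma ideal_pow_Suc_subset: "ideal_pow I (Suc n) \<subseteq> ideal_pow I n"
  unfolding ideal_pow.simps ideal_prod_def
  by (rule ideal_gen_least[OF ideal_pow_is_ideal]) (auto intro: ideal_mult_left ideal_pow_is_ideal)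

lemma ideal_pow_antimono: "m \<le> n \<Longrightarrow> ideal_pow I n \<subseteq> ideal_pow I m"
  by (rule lift_Suc_antimono_le[of "ideal_pow I"]) (rule ideal_pow_Suc_subset)

lemma ideal_pow_nat_add_mem:
  assumes "a \<in> ideal_pow I (nat i)" and "b \<in> ideal_pow I (nat j)"
  shows "a * b \<in> ideal_pow I (nat (i + j))"
proof -
  have "a * b \<in> ideal_pow I (nat i + nat j)"
    using assms by (rule ideal_pow_add_mem)
  moreover have "nat (i + j) \<le> nat i + nat j"
    by linarith
  ultimately show ?thesis
    using ideal_pow_antimono by blast
qed

lemma ideal_pow_frob_pow_subset:
  "ideal_pow (frob_pow I q) n \<subseteq> ideal_gen {g ^ q | g. g \<in> ideal_pow I n}"
proof (induction n)
  case 0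
  have "(1::'a) ^ q \<in> {g ^ q | g. g \<in> ideal_pow I 0}"
    by (auto intro: exI[of _ 1])
  then have "1 \<in> ideal_gen {g ^ q | g. g \<in> ideal_pow I 0}"
    using ideal_gen_subset by fastforce
  then have "c * 1 \<in> ideal_gen {g ^ q | g. g \<in> ideal_pow I 0}" for c :: 'a
    by (rule ideal_mult_left[OF ideal_gen_is_ideal])
  then show ?case
    by auto
next
  case (Suc n)
  have "a * b \<in> ideal_gen {g ^ q | g. g \<in> ideal_pow I (Suc n)}"
    if "a \<in> frob_pow I q" and "b \<in> ideal_pow (frob_pow I q) n" for a b
  proof (rule ideal_gen_mult_mem[OF _ _ ideal_gen_is_ideal])
    show "a \<in> ideal_gen {u ^ q | u. u \<in> I}"
      using that(1) by (simp add: frob_pow_def)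
    show "b \<in> ideal_gen {g ^ q | g. g \<in> ideal_pow I n}"
      using that(2) Suc.IH by blast
  next
    fix u v assume "u \<in> {u ^ q | u. u \<in> I}" and "v \<in> {g ^ q | g. g \<in> ideal_pow I n}"
    then obtain u' v' where uv: "u = u' ^ q" "v = v' ^ q" "u' \<in> I" "v' \<in> ideal_pow I n"
      by blast
    have "u' * v' \<in> ideal_pow I (Suc n)"
      using uv(3,4) by (rule ideal_pow_Suc_mem)
    then have "(u' * v') ^ q \<in> {g ^ q | g. g \<in> ideal_pow I (Suc n)}"
      by blast
    then show "u * v \<in> ideal_gen {g ^ q | g. g \<in> ideal_pow I (Suc n)}"
      unfolding uv(1,2) power_mult_distrib by (rule ideal_gen_subset[THEN subsetD])
  qed
  then show ?case
    unfolding ideal_pow.simps(2)[of "frob_pow I q"] ideal_prod_def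
    by (intro ideal_gen_least[OF ideal_gen_is_ideal]) blast
qed

lemma power_mem_frob_pow: "a \<in> I \<Longrightarrow> a ^ q \<in> frob_pow I q"
  unfolding frob_pow_def by (rule ideal_gen_subset[THEN subsetD]) blast

section \<open>Ring homomorphisms and the Frobenius\<close>

locale comm_ring_hom =
  fixes \<phi> :: "'a::comm_ring_1 \<Rightarrow> 'b::comm_ring_1"
  assumes hom_add: "\<phi> (a + b) = \<phi> a + \<phi> b"
    and hom_mult: "\<phi> (a * b) = \<phi> a * \<phi> b"
    and hom_one: "\<phi> 1 = 1"
begin

lemma hom_zero: "\<phi> 0 = 0"
  using hom_add[of 0 0] by simp

lemma hom_diff: "\<phi> (a - b) = \<phi> a - \<phi> b"
  using hom_add[of "a - b" b] by (simp add: algebra_simps)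

lemma hom_sum: "\<phi> (sum f A) = (\<Sum>x\<in>A. \<phi> (f x))"
  by (induction A rule: infinite_finite_induct) (simp_all add: hom_zero hom_add)

lemma hom_prod: "\<phi> (prod f A) = (\<Prod>x\<in>A. \<phi> (f x))"
  by (induction A rule: infinite_finite_induct) (simp_all add: hom_one hom_mult)

lemma hom_power: "\<phi> (a ^ n) = \<phi> a ^ n"
  by (induction n) (simp_all add: hom_one hom_mult)

lemma is_ideal_vimage: "is_ideal I \<Longrightarrow> is_ideal (\<phi> -` I)"
  unfolding is_ideal_def by (simp add: hom_zero hom_add hom_mult)

lemma ideal_pow_image:
  assumes "\<phi> ` I \<subseteq> I'"
  shows "a \<in> ideal_pow I n \<Longrightarrow> \<phi> a \<in> ideal_pow I' n"
proof (induction n arbitrary: a)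
  case (Suc n)
  have "{u * v |u v. u \<in> I \<and> v \<in> ideal_pow I n} \<subseteq> \<phi> -` ideal_pow I' (Suc n)"
  proof safe
    fix u v assume "u \<in> I" "v \<in> ideal_pow I n"
    then have "\<phi> u * \<phi> v \<in> ideal_pow I' (Suc n)"
      using assms Suc.IH by (blast intro: ideal_pow_Suc_mem)
    then show "u * v \<in> \<phi> -` ideal_pow I' (Suc n)"
      by (simp only: vimage_eq hom_mult)
  qed
  then have "ideal_pow I (Suc n) \<subseteq> \<phi> -` ideal_pow I' (Suc n)"
    unfolding ideal_pow.simps(2)[of I n] ideal_prod_def
    by (rule ideal_gen_least[OF is_ideal_vimage[OF ideal_pow_is_ideal]])
  with Suc.prems show ?case
    by (simp only: subset_iff vimage_eq)
qed simp

end

lemma comm_ring_hom_frobenius: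
  assumes "prime CHAR('a::comm_ring_1)" and "q = CHAR('a) ^ e"
  shows "comm_ring_hom (\<lambda>a::'a. a ^ q)"
proof
  show "(a + b) ^ q = a ^ q + b ^ q" for a b :: 'a
    using freshmans_dream'[OF assms] .
qed (simp_all add: power_mult_distrib)

(* Abs_fls needs a coefficient sequence vanishing far to the left, so fls_map is only
   meaningful for maps with \<phi> 0 = 0. *)
definition fls_map :: "('a::zero \<Rightarrow> 'b::zero) \<Rightarrow> 'a fls \<Rightarrow> 'b fls" where
  "fls_map \<phi> f = Abs_fls (\<lambda>n. \<phi> (f $$ n))"

lemma fls_map_nth:
  assumes "\<phi> 0 = 0"
  shows "fls_map \<phi> f $$ n = \<phi> (f $$ n)"
proof -
  obtain N where "\<forall>n<N. f $$ n = 0"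
    by (rule fls_nth_vanishes_belowE)
  then have "\<forall>n<N. \<phi> (f $$ n) = 0"
    using assms by simp
  then show ?thesis
    unfolding fls_map_def by (rule nth_Abs_fls_lower_bound)
qed

lemma fls_times_nth_lower_bounds:
  fixes f g :: "'a::comm_ring_1 fls"
  assumes f: "\<And>i. i < a \<Longrightarrow> f $$ i = 0" and g: "\<And>i. i < b \<Longrightarrow> g $$ i = 0"
  shows "(f * g) $$ n = (\<Sum>i=a..n-b. f $$ i * g $$ (n - i))"
proof (cases "f = 0 \<or> g = 0")
  case True
  then show ?thesis
    by auto
next
  case False
  then have "a \<le> fls_subdegree f" "b \<le> fls_subdegree g"
    using f g by (auto intro: fls_subdegree_geI)
  then have "{fls_subdegree f..n - fls_subdegree g} \<subseteq> {a..n-b}"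
    by auto
  moreover have "\<forall>i \<in> {a..n-b} - {fls_subdegree f..n - fls_subdegree g}. f $$ i * g $$ (n - i) = 0"
    by (auto simp: not_le)
  ultimately have "(\<Sum>i=fls_subdegree f..n - fls_subdegree g. f $$ i * g $$ (n - i))
      = (\<Sum>i=a..n-b. f $$ i * g $$ (n - i))"
    by (intro sum.mono_neutral_left) simp_all
  then show ?thesis
    by (simp add: fls_times_nth(2))
qed

lemma fls_const_times_X_intpow_nth:
  "(fls_const (c::'a::comm_ring_1) * fls_X_intpow n) $$ k = (if k = n then c else 0)"
  by (simp add: mult.commute[of "fls_const c"] fls_X_intpow_times_conv_shift)

context comm_ring_hom
begin

lemma comm_ring_hom_fls_map: "comm_ring_hom (fls_map \<phi>)"
proof
  show "fls_map \<phi> (f + g) = fls_map \<phi> f + fls_map \<phi> g" for f g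
    by (rule fls_eqI) (simp add: fls_map_nth hom_zero hom_add)
  show "fls_map \<phi> 1 = 1"
    by (rule fls_eqI) (simp add: fls_map_nth hom_zero hom_one)
  show "fls_map \<phi> (f * g) = fls_map \<phi> f * fls_map \<phi> g" for f g
  proof (rule fls_eqI)
    fix n
    obtain a b where a: "\<forall>i<a. f $$ i = 0" and b: "\<forall>i<b. g $$ i = 0"
      by (meson fls_nth_vanishes_belowE)
    have a': "\<forall>i<a. fls_map \<phi> f $$ i = 0" and b': "\<forall>i<b. fls_map \<phi> g $$ i = 0"
      using a b by (simp_all add: fls_map_nth hom_zero)
    show "fls_map \<phi> (f * g) $$ n = (fls_map \<phi> f * fls_map \<phi> g) $$ n"
      using a b a' b' by (simp add: fls_map_nth hom_zero fls_times_nth_lower_bounds[where a=a and b=b] hom_sum hom_mult)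
  qed
qed

lemma fls_map_const_times_X_intpow:
  "fls_map \<phi> (fls_const c * fls_X_intpow n) = fls_const (\<phi> c) * fls_X_intpow n"
  by (rule fls_eqI) (simp add: fls_map_nth hom_zero fls_const_times_X_intpow_nth)

end

section \<open>The extended Rees algebra\<close>

definition is_subsemiring :: "'a::comm_ring_1 set \<Rightarrow> bool" where
  "is_subsemiring S \<longleftrightarrow> 0 \<in> S \<and> 1 \<in> S \<and> (\<forall>a\<in>S. \<forall>b\<in>S. a + b \<in> S \<and> a * b \<in> S)"

lemma subsemiring_add: "is_subsemiring S \<Longrightarrow> a \<in> S \<Longrightarrow> b \<in> S \<Longrightarrow> a + b \<in> S"
  unfolding is_subsemiring_def by blast

lemma subsemiring_mult: "is_subsemiring S \<Longrightarrow> a \<in> S \<Longrightarrow> b \<in> S \<Longrightarrow> a * b \<in> S"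
  unfolding is_subsemiring_def by blast

lemma subsemiring_power: "is_subsemiring S \<Longrightarrow> a \<in> S \<Longrightarrow> a ^ n \<in> S"
  unfolding is_subsemiring_def by (induction n) auto

lemma subsemiring_prod:
  "is_subsemiring S \<Longrightarrow> (\<And>x. x \<in> A \<Longrightarrow> f x \<in> S) \<Longrightarrow> prod f A \<in> S"
  unfolding is_subsemiring_def by (induction A rule: infinite_finite_induct) auto

lemma mem_ext_rees_iff:
  "f \<in> ext_rees I \<longleftrightarrow> finite {n. f $$ n \<noteq> 0} \<and> (\<forall>n. f $$ n \<in> ideal_pow I (nat n))"
proof -
  have "f $$ n \<in> ideal_pow I (nat n)" if "\<not> 0 \<le> n" for n
    using that by simp
  then show ?thesis
    unfolding ext_rees_def by blast
qed

lemma const_times_X_intpow_in_ext_rees_iff: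
  "fls_const c * fls_X_intpow n \<in> ext_rees I \<longleftrightarrow> c \<in> ideal_pow I (nat n)"
proof -
  have "finite {k. (fls_const c * fls_X_intpow n) $$ k \<noteq> 0}"
    by (rule finite_subset[of _ "{n}"]) (auto simp: fls_const_times_X_intpow_nth)
  then show ?thesis
    by (auto simp: mem_ext_rees_iff fls_const_times_X_intpow_nth ideal_zero ideal_pow_is_ideal
        split: if_splits)
qed

lemma ext_rees_times_closed:
  assumes f: "f \<in> ext_rees I" and g: "g \<in> ext_rees I"
  shows "f * g \<in> ext_rees I"
proof -
  let ?supp = "\<lambda>h :: 'a fls. {n. h $$ n \<noteq> 0}"
  have prod_nth: "(f * g) $$ n = (\<Sum>i=fls_subdegree f..n - fls_subdegree g. f $$ i * g $$ (n - i))" for n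
    by (rule fls_times_nth(2))
  have "?supp (f * g) \<subseteq> (\<lambda>(i, j). i + j) ` (?supp f \<times> ?supp g)"
  proof
    fix n assume "n \<in> ?supp (f * g)"
    then have "(\<Sum>i=fls_subdegree f..n - fls_subdegree g. f $$ i * g $$ (n - i)) \<noteq> 0"
      by (simp add: prod_nth)
    then obtain i where "i \<in> {fls_subdegree f..n - fls_subdegree g}" and "f $$ i * g $$ (n - i) \<noteq> 0"
      by (rule sum.not_neutral_contains_not_neutral)
    then have "(i, n - i) \<in> ?supp f \<times> ?supp g"
      by auto
    then show "n \<in> (\<lambda>(i, j). i + j) ` (?supp f \<times> ?supp g)"
      by (rule image_eqI[rotated]) simp
  qed
  moreover have "finite ((\<lambda>(i, j). i + j) ` (?supp f \<times> ?supp g))"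
    using f g by (simp add: mem_ext_rees_iff)
  moreover have "(f * g) $$ n \<in> ideal_pow I (nat n)" for n
  proof -
    have "f $$ i * g $$ (n - i) \<in> ideal_pow I (nat n)" for i
      using ideal_pow_nat_add_mem[of "f $$ i" I i "g $$ (n - i)" "n - i"] f g
      by (simp add: mem_ext_rees_iff)
    then show ?thesis
      unfolding prod_nth by (intro ideal_sum ideal_pow_is_ideal)
  qed
  ultimately show ?thesis
    unfolding mem_ext_rees_iff by (blast intro: finite_subset)
qed

lemma is_subsemiring_ext_rees: "is_subsemiring (ext_rees I)"
proof -
  have "0 \<in> ext_rees I"
    by (simp add: mem_ext_rees_iff ideal_zero ideal_pow_is_ideal)
  moreover have "1 \<in> ext_rees I"
  proof -
    have "{n. (1 :: 'a fls) $$ n \<noteq> 0} \<subseteq> {0}"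
      by auto
    then show ?thesis
      by (auto simp: mem_ext_rees_iff ideal_zero ideal_pow_is_ideal intro: finite_subset)
  qed
  moreover have "f + g \<in> ext_rees I" if "f \<in> ext_rees I" and "g \<in> ext_rees I" for f g
  proof -
    have "{n. (f + g) $$ n \<noteq> 0} \<subseteq> {n. f $$ n \<noteq> 0} \<union> {n. g $$ n \<noteq> 0}"
      by auto
    with that show ?thesis
      by (auto simp: mem_ext_rees_iff intro: finite_subset ideal_add ideal_pow_is_ideal)
  qed
  ultimately show ?thesis
    unfolding is_subsemiring_def by (blast intro: ext_rees_times_closed)
qed

lemma (in comm_ring_hom) fls_map_ext_rees:
  assumes "\<phi> ` I \<subseteq> I'" and "f \<in> ext_rees I"
  shows "fls_map \<phi> f \<in> ext_rees I'"
proof -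
  have "{n. fls_map \<phi> f $$ n \<noteq> 0} \<subseteq> {n. f $$ n \<noteq> 0}"
    by (auto simp: fls_map_nth hom_zero)
  with assms(2) ideal_pow_image[OF assms(1)] show ?thesis
    by (auto simp: mem_ext_rees_iff fls_map_nth hom_zero intro: finite_subset)
qed

lemma fls_const_in_ext_rees: "fls_const c \<in> ext_rees I"
  using const_times_X_intpow_in_ext_rees_iff[of c 0 I] by simp

lemma Jq_gens_in_ext_rees: "x i ^ q \<in> I \<Longrightarrow> Jq_gens x q i \<in> ext_rees I"
  using ideal_pow_Suc_mem[of "x i ^ q" I 1 0]
  by (simp add: Jq_gens_def const_times_X_intpow_in_ext_rees_iff)

section \<open>Vanishing of classes in top Cech cohomology\<close>

lemma cech_top_class_zeroI:
  assumes "\<forall>j<d. b j \<in> S"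
    and "(\<Prod>j<d. y j) ^ N * (s * (\<Prod>j<d. y j) ^ m - (\<Prod>j<d. y j) ^ k * (\<Sum>j<d. b j * y j ^ m)) = 0"
  shows "cech_top_class_zero S y d s k"
  using assms unfolding cech_top_class_zero_def Let_def by blast

lemma cech_top_class_zeroE:
  assumes "cech_top_class_zero S y d s k"
  obtains m N b where "\<forall>j<d. b j \<in> S"
    and "(\<Prod>j<d. y j) ^ N * (s * (\<Prod>j<d. y j) ^ m - (\<Prod>j<d. y j) ^ k * (\<Sum>j<d. b j * y j ^ m)) = 0"
  using assms unfolding cech_top_class_zero_def Let_def by blast

lemma cech_relation_raise_exponents:
  fixes y b :: "nat \<Rightarrow> 'a::comm_ring_1" and d :: nat
  defines "Y \<equiv> \<Prod>j<d. y j"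
  assumes S: "is_subsemiring S" and y: "\<forall>j<d. y j \<in> S" and b: "\<forall>j<d. b j \<in> S"
    and rel: "Y ^ N * (s * Y ^ m - Y ^ k * (\<Sum>j<d. b j * y j ^ m)) = 0"
  obtains b' where "\<forall>j<d. b' j \<in> S"
    and "Y ^ (N + N') * (s * Y ^ (m + m') - Y ^ k * (\<Sum>j<d. b' j * y j ^ (m + m'))) = 0"
proof -
  \<comment> \<open>b/(Y/y_j)^m = b (Y/y_j)^m' / (Y/y_j)^(m+m'), and Y/y_j is the product over i \<noteq> j\<close>
  define b' where "b' j = b j * (\<Prod>i\<in>{..<d} - {j}. y i) ^ m'" for j
  have b'_mem: "\<forall>j<d. b' j \<in> S"
  proof (intro allI impI)
    fix j assume "j < d"
    have "(\<Prod>i\<in>{..<d} - {j}. y i) ^ m' \<in> S"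
      using y by (intro subsemiring_power[OF S] subsemiring_prod[OF S]) auto
    then show "b' j \<in> S"
      unfolding b'_def using b \<open>j < d\<close> by (intro subsemiring_mult[OF S]) auto
  qed
  have "b' j * y j ^ (m + m') = Y ^ m' * (b j * y j ^ m)" if "j < d" for j
  proof -
    have "Y = y j * (\<Prod>i\<in>{..<d} - {j}. y i)"
      unfolding Y_def using that by (simp add: prod.remove)
    then show ?thesis
      unfolding b'_def by (simp add: power_add power_mult_distrib ac_simps)
  qed
  then have "(\<Sum>j<d. b' j * y j ^ (m + m')) = Y ^ m' * (\<Sum>j<d. b j * y j ^ m)"
    unfolding sum_distrib_left by (intro sum.cong) simp_all
  then have "Y ^ (N + N') * (s * Y ^ (m + m') - Y ^ k * (\<Sum>j<d. b' j * y j ^ (m + m')))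
      = Y ^ N' * Y ^ m' * (Y ^ N * (s * Y ^ m - Y ^ k * (\<Sum>j<d. b j * y j ^ m)))"
    by (simp add: power_add algebra_simps)
  also have "\<dots> = 0"
    by (simp add: rel)
  finally show thesis
    using b'_mem that by blast
qed

lemma cech_top_class_zero_0: "is_subsemiring S \<Longrightarrow> cech_top_class_zero S y d 0 k"
  by (rule cech_top_class_zeroI[where b = "\<lambda>_. 0" and N = 0 and m = 0]) (simp_all add: is_subsemiring_def)

lemma cech_top_class_zero_add:
  assumes S: "is_subsemiring S" and y: "\<forall>j<d. y j \<in> S"
    and s1: "cech_top_class_zero S y d s1 k" and s2: "cech_top_class_zero S y d s2 k"
  shows "cech_top_class_zero S y d (s1 + s2) k"
proof -
  let ?Y = "\<Prod>j<d. y j"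
  obtain m1 N1 b1 where b1: "\<forall>j<d. b1 j \<in> S"
    and rel1: "?Y ^ N1 * (s1 * ?Y ^ m1 - ?Y ^ k * (\<Sum>j<d. b1 j * y j ^ m1)) = 0"
    using s1 by (rule cech_top_class_zeroE)
  obtain m2 N2 b2 where b2: "\<forall>j<d. b2 j \<in> S"
    and rel2: "?Y ^ N2 * (s2 * ?Y ^ m2 - ?Y ^ k * (\<Sum>j<d. b2 j * y j ^ m2)) = 0"
    using s2 by (rule cech_top_class_zeroE)
  obtain c1 where c1: "\<forall>j<d. c1 j \<in> S"
    and rel1': "?Y ^ (N1 + N2) * (s1 * ?Y ^ (m1 + m2) - ?Y ^ k * (\<Sum>j<d. c1 j * y j ^ (m1 + m2))) = 0"
    by (rule cech_relation_raise_exponents[OF S y b1 rel1])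
  obtain c2 where c2: "\<forall>j<d. c2 j \<in> S"
    and rel2': "?Y ^ (N2 + N1) * (s2 * ?Y ^ (m2 + m1) - ?Y ^ k * (\<Sum>j<d. c2 j * y j ^ (m2 + m1))) = 0"
    by (rule cech_relation_raise_exponents[OF S y b2 rel2])
  show ?thesis
  proof (rule cech_top_class_zeroI)
    show "\<forall>j<d. c1 j + c2 j \<in> S"
      using c1 c2 by (blast intro: subsemiring_add[OF S])
    show "?Y ^ (N1 + N2) * ((s1 + s2) * ?Y ^ (m1 + m2)
        - ?Y ^ k * (\<Sum>j<d. (c1 j + c2 j) * y j ^ (m1 + m2))) = 0"
      using arg_cong2[OF rel1' rel2', of "(+)"] by (simp add: algebra_simps sum.distrib)
  qed
qed

lemma cech_top_class_zero_mult:
  assumes S: "is_subsemiring S" and r: "r \<in> S" and s: "cech_top_class_zero S y d s k"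
  shows "cech_top_class_zero S y d (r * s) k"
proof -
  let ?Y = "\<Prod>j<d. y j"
  obtain m N b where b: "\<forall>j<d. b j \<in> S"
    and rel: "?Y ^ N * (s * ?Y ^ m - ?Y ^ k * (\<Sum>j<d. b j * y j ^ m)) = 0"
    using s by (rule cech_top_class_zeroE)
  show ?thesis
  proof (rule cech_top_class_zeroI)
    show "\<forall>j<d. r * b j \<in> S"
      using b r by (blast intro: subsemiring_mult[OF S])
    show "?Y ^ N * (r * s * ?Y ^ m - ?Y ^ k * (\<Sum>j<d. r * b j * y j ^ m)) = 0"
      using arg_cong[OF rel, of "(*) r"] by (simp add: algebra_simps sum_distrib_left)
  qed
qed

lemma (in comm_ring_hom) cech_top_class_zero_image:
  assumes S: "\<forall>a\<in>S. \<phi> a \<in> S'" and y: "\<forall>j<d. \<phi> (y j) = y' j"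
    and s: "cech_top_class_zero S y d s k"
  shows "cech_top_class_zero S' y' d (\<phi> s) k"
proof -
  obtain m N b where b: "\<forall>j<d. b j \<in> S"
    and rel: "(\<Prod>j<d. y j) ^ N * (s * (\<Prod>j<d. y j) ^ m - (\<Prod>j<d. y j) ^ k * (\<Sum>j<d. b j * y j ^ m)) = 0"
    using s by (rule cech_top_class_zeroE)
  have Y: "\<phi> (\<Prod>j<d. y j) = (\<Prod>j<d. y' j)"
    unfolding hom_prod using y by (intro prod.cong) auto
  have sum: "\<phi> (\<Sum>j<d. b j * y j ^ m) = (\<Sum>j<d. \<phi> (b j) * y' j ^ m)"
    unfolding hom_sum using y by (intro sum.cong) (auto simp: hom_mult hom_power)
  show ?thesis
  proof (rule cech_top_class_zeroI)
    show "\<forall>j<d. \<phi> (b j) \<in> S'"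
      using b S by blast
    show "(\<Prod>j<d. y' j) ^ N * (\<phi> s * (\<Prod>j<d. y' j) ^ m
        - (\<Prod>j<d. y' j) ^ k * (\<Sum>j<d. \<phi> (b j) * y' j ^ m)) = 0"
      using arg_cong[OF rel, of \<phi>] by (simp only: hom_zero hom_mult hom_diff hom_power Y sum)
  qed
qed

lemma is_ideal_cech_top_class_zero_coeffs:
  assumes S: "is_subsemiring S" and y: "\<forall>j<d. y j \<in> S" and const: "\<And>r. fls_const r \<in> S"
  shows "is_ideal {c. cech_top_class_zero S y d (fls_const c * fls_X_intpow n) k}"
proof (rule is_idealI; unfold mem_Collect_eq)
  show "cech_top_class_zero S y d (fls_const 0 * fls_X_intpow n) k"
    using cech_top_class_zero_0[OF S] by simp
  show "cech_top_class_zero S y d (fls_const (a + b) * fls_X_intpow n) k"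
    if "cech_top_class_zero S y d (fls_const a * fls_X_intpow n) k"
      and "cech_top_class_zero S y d (fls_const b * fls_X_intpow n) k" for a b
    using cech_top_class_zero_add[OF S y that]
    by (simp flip: fls_plus_const add: distrib_right)
  show "cech_top_class_zero S y d (fls_const (r * a) * fls_X_intpow n) k"
    if "cech_top_class_zero S y d (fls_const a * fls_X_intpow n) k" for r a
    using cech_top_class_zero_mult[OF S const that]
    by (simp flip: fls_const_mult_const add: mult.assoc)
qed

lemma a_inv_top_mono:
  assumes "\<And>n. cech_top_component_nonzero S y d n \<Longrightarrow> cech_top_component_nonzero S' y' d' n"
  shows "a_inv_top S y d \<le> a_inv_top S' y' d'"
  unfolding a_inv_top_def by (rule Sup_subset_mono) (use assms in blast)

lemma cech_top_class_zero_frobenius: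
  fixes I :: "'a::comm_ring_1 set"
  assumes char: "prime CHAR('a)" and q: "q = CHAR('a) ^ e"
    and zero: "cech_top_class_zero (ext_rees I) (Jq_gens x 1) d (fls_const c * fls_X_intpow M) k"
  shows "cech_top_class_zero (ext_rees (frob_pow I q)) (Jq_gens x q) d
           (fls_const (c ^ q) * fls_X_intpow M) k"
proof -
  interpret frob: comm_ring_hom "\<lambda>a::'a. a ^ q"
    by (rule comm_ring_hom_frobenius[OF char q])
  interpret F: comm_ring_hom "fls_map (\<lambda>a::'a. a ^ q)"
    by (rule frob.comm_ring_hom_fls_map)
  have "(\<lambda>a. a ^ q) ` I \<subseteq> frob_pow I q"
    by (auto intro: power_mem_frob_pow)
  then have "\<forall>f\<in>ext_rees I. fls_map (\<lambda>a. a ^ q) f \<in> ext_rees (frob_pow I q)"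
    by (intro ballI frob.fls_map_ext_rees)
  moreover have "\<forall>j<d. fls_map (\<lambda>a. a ^ q) (Jq_gens x 1 j) = Jq_gens x q j"
    by (simp add: Jq_gens_def frob.fls_map_const_times_X_intpow)
  ultimately have "cech_top_class_zero (ext_rees (frob_pow I q)) (Jq_gens x q) d
      (fls_map (\<lambda>a. a ^ q) (fls_const c * fls_X_intpow M)) k"
    using zero by (rule F.cech_top_class_zero_image)
  then show ?thesis
    by (simp add: frob.fls_map_const_times_X_intpow)
qed

lemma cech_top_component_nonzero_frob_pow:
  fixes I :: "'a::comm_ring_1 set"
  assumes char: "prime CHAR('a)" and q: "q = CHAR('a) ^ e" and x: "\<forall>i<d. x i \<in> I"
    and nonzero: "cech_top_component_nonzero (ext_rees (frob_pow I q)) (Jq_gens x q) d n"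
  shows "cech_top_component_nonzero (ext_rees I) (Jq_gens x 1) d n"
proof (rule ccontr)
  assume zero: "\<not> ?thesis"
  obtain k c where c: "fls_const c * fls_X_intpow (n + int (d * k)) \<in> ext_rees (frob_pow I q)"
    and c_nonzero: "\<not> cech_top_class_zero (ext_rees (frob_pow I q)) (Jq_gens x q) d
                      (fls_const c * fls_X_intpow (n + int (d * k))) k"
    using nonzero unfolding cech_top_component_nonzero_def by blast
  define M where "M = n + int (d * k)"
  define Z where "Z = {c. cech_top_class_zero (ext_rees (frob_pow I q)) (Jq_gens x q) d
                            (fls_const c * fls_X_intpow M) k}"
  have "\<forall>j<d. Jq_gens x q j \<in> ext_rees (frob_pow I q)"
    using x by (auto intro: Jq_gens_in_ext_rees power_mem_frob_pow)
  then have Z_ideal: "is_ideal Z"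
    unfolding Z_def
    by (rule is_ideal_cech_top_class_zero_coeffs[OF is_subsemiring_ext_rees _ fls_const_in_ext_rees])
  have "g ^ q \<in> Z" if "g \<in> ideal_pow I (nat M)" for g
  proof -
    have "fls_const g * fls_X_intpow M \<in> ext_rees I"
      using that by (simp add: const_times_X_intpow_in_ext_rees_iff)
    then have "cech_top_class_zero (ext_rees I) (Jq_gens x 1) d (fls_const g * fls_X_intpow M) k"
      using zero unfolding cech_top_component_nonzero_def M_def by blast
    then show ?thesis
      unfolding Z_def using cech_top_class_zero_frobenius[OF char q] by blast
  qed
  then have "{g ^ q | g. g \<in> ideal_pow I (nat M)} \<subseteq> Z"
    by blast
  with Z_ideal have "ideal_gen {g ^ q | g. g \<in> ideal_pow I (nat M)} \<subseteq> Z"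
    by (rule ideal_gen_least)
  moreover have "c \<in> ideal_pow (frob_pow I q) (nat M)"
    using c unfolding M_def by (simp only: const_times_X_intpow_in_ext_rees_iff)
  ultimately have "c \<in> Z"
    using ideal_pow_frob_pow_subset by blast
  then show False
    using c_nonzero unfolding Z_def M_def by blast
qed

theorem proposition3p4:
  fixes m I J :: "'a::comm_ring_1 set" and x :: "nat \<Rightarrow> 'a" and d p e :: nat
  assumes "prime p" and "CHAR('a) = p"
    and "local_ring m" and "krull_dim_eq TYPE('a) d"
    and "primary_to m I"
    and "system_of_parameters m d x"
    and "J = ideal_gen (x ` {..<d})"
    and "is_minimal_reduction J I"
  shows "a_inv_top (ext_rees (frob_pow I (p ^ e))) (Jq_gens x (p ^ e)) d
           \<le> a_inv_top (ext_rees I) (Jq_gens x 1) d"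
proof -
  have "x ` {..<d} \<subseteq> J"
    unfolding assms(7) by (rule ideal_gen_subset)
  moreover have "J \<subseteq> I"
    using assms(8) by (simp add: is_minimal_reduction_def is_reduction_def)
  ultimately have x: "\<forall>i<d. x i \<in> I"
    by blast
  have char: "prime CHAR('a)" and q: "p ^ e = CHAR('a) ^ e"
    using assms(1,2) by simp_all
  show ?thesis
    by (rule a_inv_top_mono, rule cech_top_component_nonzero_frob_pow[OF char q x])
qed

end
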